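(* Let $\langle\mathcal{X},\mathsf{cap}\rangle$ be a $\textsf{VCh}$ instance with $\mathcal{X}=\langle\mathsf{S},\mathsf{po}\rangle$, and let $G_{\mathsf{frontier}}$ be its frontier graph. Then $\langle\mathcal{X},\mathsf{cap}\rangle$ is consistent if and only if some sink node of $G_{\mathsf{frontier}}$ is reachable from the source node.
   Context: Channels and events. Each channel $\mathtt{ch}$ has a capacity $\mathsf{cap}(\mathtt{ch})\in\mathbb{N}$; $\mathtt{ch}$ is synchronous if $\mathsf{cap}(\mathtt{ch})=0$ and asynchronous otherwise. An event is a tuple $e=\langle id,\tau,\mathsf{op}(\mathtt{ch},\mathsf{val})\rangle$ with a unique identifier $id$, a thread $\tau$, an operation $\mathsf{op}\in\{\mathtt{snd},\mathtt{rcv}\}$, a channel $\mathtt{ch}$ and a value $\mathsf{val}$. An execution is a finite sequence $\sigma$ of distinct events. $\sigma$ is well-formed (w.r.t. $\mathsf{cap}$) if: (i) for every asynchronous $\mathtt{ch}$ and every prefix $\pi$ of $\sigma$, $R_\pi(\mathtt{ch})\le S_\pi(\mathtt{ch})\le R_\pi(\mathtt{ch})+\mathsf{cap}(\mathtt{ch})$, where $S_\pi(\mathtt{ch})$, $R_\pi(\mathtt{ch})$ are the numbers of send, resp. receive, events on $\mathtt{ch}$ in $\pi$; (ii) for every synchronous $\mathtt{ch}$, every send on $\mathtt{ch}$ is immediately followed in $\sigma$ by a receive on $\mathtt{ch}$ of a different thread, and every receive on $\mathtt{ch}$ is immediately preceded in $\sigma$ by a send on $\mathtt{ch}$ of a different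 thread; (iii) for every channel $\mathtt{ch}$ and every $i$, if $\sigma$ contains an $i$-th receive on $\mathtt{ch}$, then the $i$-th send on $\mathtt{ch}$ has the same value as it. The program order $\mathsf{po}_\sigma$ is the set of pairs $(e,f)$ with $e$ before $f$ in $\sigma$ and in the same thread. An abstract execution is $\mathcal{X}=\langle \mathsf{S},\mathsf{po}\rangle$ where $\mathsf{S}$ is a finite set of events and $\mathsf{po}$ is a strict order that totally orders the events of each thread and relates no events of different threads. Given a capacity function $\mathsf{cap}$ on the channels occurring in $\mathsf{S}$, an execution $\sigma$ concretizes $\langle\mathcal{X},\mathsf{cap}\rangle$ if its set of events is $\mathsf{S}$, $\mathsf{po}_\sigma=\mathsf{po}$ and $\sigma$ is well-formed; $\langle\mathcal{X},\mathsf{cap}\rangle$ is consistent if it has a concretization. Frontier graph. For $Y\subseteq\mathsf{S}$ let $\#^{Y}_{\mathtt{snd}}(\mathtt{ch})$, $\#^{Y}_{\mathtt{rcv}}(\mathtt{ch})$ be the numbers of send, resp. receive, events on $\mathtt{ch}$ in $Y$. The nodes of $G_{\mathsf{frontier}}$ are triples $\langle Y,Q,I\rangle$ such that: (1) $Y\subseteq\mathsf{S}$ is downward closed under $\mathsf{po}$; for all synchronous channels $\mathtt{ch}$, $\#^{Y}_{\mathtt{rcv}}(\mathtt{ch})=\#^{Y}_{\mathtt{snd}}(\mathtt{ch})$ except for at most one synchronous channel, for which $\#^{Y}_{\mathtt{rcv}}(\mathtt{ch})=\#^{Y}_{\mathtt{snd}}(\mathtt{ch})-1$; and for every asynchronous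 $\mathtt{ch}$, $\#^{Y}_{\mathtt{rcv}}(\mathtt{ch})\le\#^{Y}_{\mathtt{snd}}(\mathtt{ch})\le\#^{Y}_{\mathtt{rcv}}(\mathtt{ch})+\mathsf{cap}(\mathtt{ch})$; (2) $Q$ maps each asynchronous channel $\mathtt{ch}$ to a sequence of events of $Y$ of length at most $\mathsf{cap}(\mathtt{ch})$, such that each event $e$ occurring in $Q(\mathtt{ch})$ is one of the last $|Q(\mathtt{ch})|$ send events on $\mathtt{ch}$ of the thread of $e$; (3) $I$ is $\bot$ if all synchronous channels satisfy $\#^{Y}_{\mathtt{rcv}}=\#^{Y}_{\mathtt{snd}}$, and otherwise $I$ is a send event on the (unique) synchronous channel $\mathtt{ch}$ with $\#^{Y}_{\mathtt{rcv}}(\mathtt{ch})=\#^{Y}_{\mathtt{snd}}(\mathtt{ch})-1$. The source node is $\langle\emptyset,\lambda\mathtt{ch}.\epsilon,\bot\rangle$; the sink nodes are all nodes of the form $\langle\mathsf{S},Q,\bot\rangle$. There is an edge $\langle Y_1,Q_1,I_1\rangle\to\langle Y_2,Q_2,I_2\rangle$ iff there is $e\in\mathsf{S}\setminus Y_1$ with $Y_2=Y_1\cup\{e\}$, and, letting $\mathtt{ch}$ be the channel of $e$: (a) if $\mathtt{ch}$ is asynchronous and $e$ is a receive: $I_1=I_2=\bot$, $Q_1(\mathtt{ch})$ is nonempty, its first event has the same value as $e$, $Q_1(\mathtt{ch})=f\cdot Q_2(\mathtt{ch})$ for that first event $f$, and $Q_2(\mathtt{ch}')=Q_1(\mathtt{ch}')$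 for all other asynchronous $\mathtt{ch}'$; (b) if $\mathtt{ch}$ is asynchronous and $e$ is a send: $I_1=I_2=\bot$, $|Q_1(\mathtt{ch})|<\mathsf{cap}(\mathtt{ch})$, $Q_2(\mathtt{ch})=Q_1(\mathtt{ch})\cdot e$, and $Q_2(\mathtt{ch}')=Q_1(\mathtt{ch}')$ for all other asynchronous $\mathtt{ch}'$; (c) if $\mathtt{ch}$ is synchronous and $e$ is a send: $I_1=\bot$, $I_2=e$, and $Q_1=Q_2$; (d) if $\mathtt{ch}$ is synchronous and $e$ is a receive: $I_1=e'\neq\bot$ where $e'$ is a send on $\mathtt{ch}$ with the same value as $e$ and a thread different from that of $e$, $I_2=\bot$, and $Q_1=Q_2$. *)

theory Defs
  imports Main
begin

datatype operation = Snd | Rcv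

datatype ('i, 't, 'c, 'v) event =
  Event (ev_id: 'i) (ev_thread: 't) (ev_op: operation) (ev_ch: 'c) (ev_val: 'v)

definition is_sync :: "('c \<Rightarrow> nat) \<Rightarrow> 'c \<Rightarrow> bool" where
  "is_sync cap ch \<longleftrightarrow> cap ch = 0"

definition is_async :: "('c \<Rightarrow> nat) \<Rightarrow> 'c \<Rightarrow> bool" where
  "is_async cap ch \<longleftrightarrow> cap ch > 0"

definition is_snd_on :: "'c \<Rightarrow> ('i, 't, 'c, 'v) event \<Rightarrow> bool" where
  "is_snd_on ch e \<longleftrightarrow> ev_op e = Snd \<and> ev_ch e = ch"

definition is_rcv_on :: "'c \<Rightarrow> ('i, 't, 'c, 'v) event \<Rightarrow> bool" where
  "is_rcv_on ch e \<longleftrightarrow> ev_op e = Rcv \<and> ev_ch e = ch"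

definition S_cnt :: "('i, 't, 'c, 'v) event list \<Rightarrow> 'c \<Rightarrow> nat" where
  "S_cnt \<pi> ch = length (filter (is_snd_on ch) \<pi>)"

definition R_cnt :: "('i, 't, 'c, 'v) event list \<Rightarrow> 'c \<Rightarrow> nat" where
  "R_cnt \<pi> ch = length (filter (is_rcv_on ch) \<pi>)"

definition well_formed :: "('c \<Rightarrow> nat) \<Rightarrow> ('i, 't, 'c, 'v) event list \<Rightarrow> bool" where
  "well_formed cap \<sigma> \<longleftrightarrow>
     \<comment> \<open>(i) asynchronous channels: buffer bounds on every prefix\<close>
     (\<forall>ch. is_async cap ch \<longrightarrow>
        (\<forall>k\<le>length \<sigma>. R_cnt (take k \<sigma>) ch \<le> S_cnt (take k \<sigma>) ch
                        \<and> S_cnt (take k \<sigma>) ch \<le> R_cnt (take k \<sigma>) ch + cap ch)) \<and>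
     \<comment> \<open>(ii) synchronous channels: sends immediately followed by a matching receive and vice versa\<close>
     (\<forall>ch. is_sync cap ch \<longrightarrow>
        (\<forall>i<length \<sigma>. is_snd_on ch (\<sigma> ! i) \<longrightarrow>
            Suc i < length \<sigma> \<and> is_rcv_on ch (\<sigma> ! Suc i)
            \<and> ev_thread (\<sigma> ! Suc i) \<noteq> ev_thread (\<sigma> ! i)) \<and>
        (\<forall>i<length \<sigma>. is_rcv_on ch (\<sigma> ! i) \<longrightarrow>
            0 < i \<and> is_snd_on ch (\<sigma> ! (i - 1))
            \<and> ev_thread (\<sigma> ! (i - 1)) \<noteq> ev_thread (\<sigma> ! i))) \<and>
     \<comment> \<open>(iii) the i-th receive on ch has the value of the i-th send on ch\<close>
     (\<forall>ch i. i < length (filter (is_rcv_on ch) \<sigma>) \<longrightarrow>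
        i < length (filter (is_snd_on ch) \<sigma>) \<and>
        ev_val (filter (is_snd_on ch) \<sigma> ! i) = ev_val (filter (is_rcv_on ch) \<sigma> ! i))"

definition po_of :: "('i, 't, 'c, 'v) event list \<Rightarrow> (('i, 't, 'c, 'v) event \<times> ('i, 't, 'c, 'v) event) set" where
  "po_of \<sigma> = {(\<sigma> ! i, \<sigma> ! j) | i j. i < j \<and> j < length \<sigma> \<and> ev_thread (\<sigma> ! i) = ev_thread (\<sigma> ! j)}"

definition abstract_execution ::
  "('i, 't, 'c, 'v) event set \<Rightarrow> (('i, 't, 'c, 'v) event \<times> ('i, 't, 'c, 'v) event) set \<Rightarrow> bool" where
  "abstract_execution S po \<longleftrightarrow>
     finite S \<and> inj_on ev_id S \<and>
     po \<subseteq> S \<times> S \<and> irrefl po \<and> trans po \<and>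
     (\<forall>e\<in>S. \<forall>f\<in>S. ev_thread e = ev_thread f \<and> e \<noteq> f \<longrightarrow> (e, f) \<in> po \<or> (f, e) \<in> po) \<and>
     (\<forall>(e, f)\<in>po. ev_thread e = ev_thread f)"

definition concretizes ::
  "('i, 't, 'c, 'v) event list \<Rightarrow> ('i, 't, 'c, 'v) event set
   \<Rightarrow> (('i, 't, 'c, 'v) event \<times> ('i, 't, 'c, 'v) event) set \<Rightarrow> ('c \<Rightarrow> nat) \<Rightarrow> bool" where
  "concretizes \<sigma> S po cap \<longleftrightarrow>
     distinct \<sigma> \<and> set \<sigma> = S \<and> po_of \<sigma> = po \<and> well_formed cap \<sigma>"

definition consistent ::
  "('i, 't, 'c, 'v) event set \<Rightarrow> (('i, 't, 'c, 'v) event \<times> ('i, 't, 'c, 'v) event) set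
   \<Rightarrow> ('c \<Rightarrow> nat) \<Rightarrow> bool" where
  "consistent S po cap \<longleftrightarrow> (\<exists>\<sigma>. concretizes \<sigma> S po cap)"

definition cnt_snd :: "('i, 't, 'c, 'v) event set \<Rightarrow> 'c \<Rightarrow> nat" where
  "cnt_snd Y ch = card {e\<in>Y. is_snd_on ch e}"

definition cnt_rcv :: "('i, 't, 'c, 'v) event set \<Rightarrow> 'c \<Rightarrow> nat" where
  "cnt_rcv Y ch = card {e\<in>Y. is_rcv_on ch e}"

type_synonym ('i, 't, 'c, 'v) fnode =
  "('i, 't, 'c, 'v) event set \<times> ('c \<Rightarrow> ('i, 't, 'c, 'v) event list) \<times> ('i, 't, 'c, 'v) event option"

definition among_last_sends ::
  "(('i, 't, 'c, 'v) event \<times> ('i, 't, 'c, 'v) event) set \<Rightarrow> ('i, 't, 'c, 'v) event set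
   \<Rightarrow> 'c \<Rightarrow> nat \<Rightarrow> ('i, 't, 'c, 'v) event \<Rightarrow> bool" where
  "among_last_sends po Y ch k e \<longleftrightarrow>
     e \<in> Y \<and> is_snd_on ch e \<and>
     card {f\<in>Y. is_snd_on ch f \<and> ev_thread f = ev_thread e \<and> (e, f) \<in> po} < k"

definition frontier_node ::
  "('i, 't, 'c, 'v) event set \<Rightarrow> (('i, 't, 'c, 'v) event \<times> ('i, 't, 'c, 'v) event) set
   \<Rightarrow> ('c \<Rightarrow> nat) \<Rightarrow> ('i, 't, 'c, 'v) fnode \<Rightarrow> bool" where
  "frontier_node S po cap N \<longleftrightarrow> (case N of (Y, Q, I) \<Rightarrow>
     \<comment> \<open>(1)\<close>
     Y \<subseteq> S \<and> (\<forall>f\<in>Y. \<forall>e. (e, f) \<in> po \<longrightarrow> e \<in> Y) \<and>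
     (\<forall>ch. is_sync cap ch \<longrightarrow>
        cnt_rcv Y ch = cnt_snd Y ch \<or> cnt_rcv Y ch + 1 = cnt_snd Y ch) \<and>
     (\<forall>ch1 ch2. is_sync cap ch1 \<and> is_sync cap ch2 \<and>
        cnt_rcv Y ch1 + 1 = cnt_snd Y ch1 \<and> cnt_rcv Y ch2 + 1 = cnt_snd Y ch2 \<longrightarrow> ch1 = ch2) \<and>
     (\<forall>ch. is_async cap ch \<longrightarrow>
        cnt_rcv Y ch \<le> cnt_snd Y ch \<and> cnt_snd Y ch \<le> cnt_rcv Y ch + cap ch) \<and>
     \<comment> \<open>(2) Q is only defined (non-empty) on asynchronous channels\<close>
     (\<forall>ch. is_sync cap ch \<longrightarrow> Q ch = []) \<and>
     (\<forall>ch. is_async cap ch \<longrightarrow>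
        length (Q ch) \<le> cap ch \<and>
        (\<forall>e\<in>set (Q ch). among_last_sends po Y ch (length (Q ch)) e)) \<and>
     \<comment> \<open>(3)\<close>
     (if (\<forall>ch. is_sync cap ch \<longrightarrow> cnt_rcv Y ch = cnt_snd Y ch)
      then I = None
      else (\<exists>e ch. I = Some e \<and> e \<in> S \<and> is_sync cap ch \<and> is_snd_on ch e
                  \<and> cnt_rcv Y ch + 1 = cnt_snd Y ch)))"

definition frontier_edge ::
  "('i, 't, 'c, 'v) event set \<Rightarrow> (('i, 't, 'c, 'v) event \<times> ('i, 't, 'c, 'v) event) set
   \<Rightarrow> ('c \<Rightarrow> nat) \<Rightarrow> ('i, 't, 'c, 'v) fnode \<Rightarrow> ('i, 't, 'c, 'v) fnode \<Rightarrow> bool" where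
  "frontier_edge S po cap N1 N2 \<longleftrightarrow>
     frontier_node S po cap N1 \<and> frontier_node S po cap N2 \<and>
     (case N1 of (Y1, Q1, I1) \<Rightarrow> case N2 of (Y2, Q2, I2) \<Rightarrow>
       (\<exists>e\<in>S - Y1. Y2 = insert e Y1 \<and>
         (let ch = ev_ch e in
          \<comment> \<open>(a) asynchronous receive\<close>
          (is_async cap ch \<and> ev_op e = Rcv \<and> I1 = None \<and> I2 = None \<and>
             Q1 ch \<noteq> [] \<and> ev_val (hd (Q1 ch)) = ev_val e \<and> Q1 ch = hd (Q1 ch) # Q2 ch \<and>
             (\<forall>ch'. is_async cap ch' \<and> ch' \<noteq> ch \<longrightarrow> Q2 ch' = Q1 ch')) \<or>
          \<comment> \<open>(b) asynchronous send\<close>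
          (is_async cap ch \<and> ev_op e = Snd \<and> I1 = None \<and> I2 = None \<and>
             length (Q1 ch) < cap ch \<and> Q2 ch = Q1 ch @ [e] \<and>
             (\<forall>ch'. is_async cap ch' \<and> ch' \<noteq> ch \<longrightarrow> Q2 ch' = Q1 ch')) \<or>
          \<comment> \<open>(c) synchronous send\<close>
          (is_sync cap ch \<and> ev_op e = Snd \<and> I1 = None \<and> I2 = Some e \<and> Q1 = Q2) \<or>
          \<comment> \<open>(d) synchronous receive\<close>
          (is_sync cap ch \<and> ev_op e = Rcv \<and>
             (\<exists>e'. I1 = Some e' \<and> is_snd_on ch e' \<and> ev_val e' = ev_val e
                    \<and> ev_thread e' \<noteq> ev_thread e) \<and>
             I2 = None \<and> Q1 = Q2))))"

definition frontier_source :: "('i, 't, 'c, 'v) fnode" where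
  "frontier_source = ({}, (\<lambda>ch. []), None)"

definition frontier_sink ::
  "('i, 't, 'c, 'v) event set \<Rightarrow> (('i, 't, 'c, 'v) event \<times> ('i, 't, 'c, 'v) event) set
   \<Rightarrow> ('c \<Rightarrow> nat) \<Rightarrow> ('i, 't, 'c, 'v) fnode \<Rightarrow> bool" where
  "frontier_sink S po cap N \<longleftrightarrow> frontier_node S po cap N \<and> fst N = S \<and> snd (snd N) = None"

end

theory Submission
  imports Defs
begin

text \<open>Read a path from the source as an execution built event by event. Every node on it is
  the frontier of the prefix built so far: its events, the not yet received asynchronous sends of
  each channel, and the synchronous send still waiting for its partner. An edge appends exactly an
  event that is enabled in this state, and a sequence all of whose events are enabled is
  well-formed precisely when it leaves no synchronous send pending. Since node sets are
  \<open>po\<close>-closed, the sequences so built are the linearizations of \<open>po\<close>, so sinks reachable from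
  the source correspond to concretizations.\<close>

lemma is_async_iff_not_sync: "is_async cap ch \<longleftrightarrow> \<not> is_sync cap ch"
  by (auto simp: is_async_def is_sync_def)

lemma S_cnt_snoc: "S_cnt (\<tau> @ [e]) ch = S_cnt \<tau> ch + (if is_snd_on ch e then 1 else 0)"
  by (simp add: S_cnt_def)

lemma R_cnt_snoc: "R_cnt (\<tau> @ [e]) ch = R_cnt \<tau> ch + (if is_rcv_on ch e then 1 else 0)"
  by (simp add: R_cnt_def)

lemma filter_take_nth:
  assumes "k < length xs" and "P (xs ! k)"
  shows "length (filter P (take k xs)) < length (filter P xs)"
    and "filter P xs ! length (filter P (take k xs)) = xs ! k"
proof -
  have "filter P xs = filter P (take k xs) @ xs ! k # filter P (drop (Suc k) xs)"
    using assms by (metis id_take_nth_drop filter.simps(2) filter_append)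
  then show "length (filter P (take k xs)) < length (filter P xs)"
    and "filter P xs ! length (filter P (take k xs)) = xs ! k"
    by (simp_all add: nth_append)
qed

lemma nth_filter_take:
  "i < length (filter P (take k xs)) \<Longrightarrow> filter P xs ! i = filter P (take k xs) ! i"
  by (metis append_take_drop_id filter_append nth_append)

subsection \<open>Frontiers of prefixes\<close>

definition pending_send :: "('c \<Rightarrow> nat) \<Rightarrow> ('i, 't, 'c, 'v) event list \<Rightarrow> ('i, 't, 'c, 'v) event option" where
  "pending_send cap \<tau> =
     (if \<tau> \<noteq> [] \<and> is_sync cap (ev_ch (last \<tau>)) \<and> ev_op (last \<tau>) = Snd then Some (last \<tau>) else None)"

text \<open>Channels are FIFO: the \<open>i\<close>-th receive on a channel consumes its \<open>i\<close>-th send, so the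
  buffer holds the sends past the first \<open>R_cnt\<close> ones.\<close>
definition buffered :: "('c \<Rightarrow> nat) \<Rightarrow> ('i, 't, 'c, 'v) event list \<Rightarrow> 'c \<Rightarrow> ('i, 't, 'c, 'v) event list" where
  "buffered cap \<tau> ch = (if is_async cap ch then drop (R_cnt \<tau> ch) (filter (is_snd_on ch) \<tau>) else [])"

definition frontier_of :: "('c \<Rightarrow> nat) \<Rightarrow> ('i, 't, 'c, 'v) event list \<Rightarrow> ('i, 't, 'c, 'v) fnode" where
  "frontier_of cap \<tau> = (set \<tau>, buffered cap \<tau>, pending_send cap \<tau>)"

definition enabled :: "('c \<Rightarrow> nat) \<Rightarrow> ('i, 't, 'c, 'v) event list \<Rightarrow> ('i, 't, 'c, 'v) event \<Rightarrow> bool" where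
  "enabled cap \<tau> e \<longleftrightarrow> (let ch = ev_ch e in
     if is_sync cap ch then
       (if ev_op e = Snd then pending_send cap \<tau> = None
        else \<exists>e'. pending_send cap \<tau> = Some e' \<and> is_snd_on ch e' \<and> ev_val e' = ev_val e
                  \<and> ev_thread e' \<noteq> ev_thread e)
     else pending_send cap \<tau> = None \<and>
       (if ev_op e = Snd then length (buffered cap \<tau> ch) < cap ch
        else buffered cap \<tau> ch \<noteq> [] \<and> ev_val (hd (buffered cap \<tau> ch)) = ev_val e))"

definition admissible :: "('c \<Rightarrow> nat) \<Rightarrow> ('i, 't, 'c, 'v) event list \<Rightarrow> bool" where
  "admissible cap \<sigma> \<longleftrightarrow> (\<forall>k<length \<sigma>. enabled cap (take k \<sigma>) (\<sigma> ! k))"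

lemma frontier_of_Nil: "frontier_of cap [] = frontier_source"
  by (auto simp: frontier_of_def frontier_source_def buffered_def pending_send_def)

lemma pending_send_snoc:
  "pending_send cap (\<tau> @ [e]) = (if is_sync cap (ev_ch e) \<and> ev_op e = Snd then Some e else None)"
  by (simp add: pending_send_def)

lemma pending_send_SomeD:
  assumes "pending_send cap \<tau> = Some e"
  shows "\<tau> = butlast \<tau> @ [e]" and "is_sync cap (ev_ch e)" and "ev_op e = Snd"
  using assms by (auto simp: pending_send_def split: if_splits)

lemma pending_send_take:
  "k \<le> length \<sigma> \<Longrightarrow> pending_send cap (take k \<sigma>) =
     (if 0 < k \<and> is_sync cap (ev_ch (\<sigma> ! (k - 1))) \<and> ev_op (\<sigma> ! (k - 1)) = Snd
      then Some (\<sigma> ! (k - 1)) else None)"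
  by (cases k) (auto simp: pending_send_def take_Suc_conv_app_nth)

lemma buffered_sync: "is_sync cap ch \<Longrightarrow> buffered cap \<tau> ch = []"
  by (simp add: buffered_def is_async_iff_not_sync)

lemma buffered_eq_Nil_iff: "buffered cap \<tau> ch = [] \<longleftrightarrow> is_sync cap ch \<or> S_cnt \<tau> ch \<le> R_cnt \<tau> ch"
  by (auto simp: buffered_def S_cnt_def is_async_iff_not_sync)

lemma length_buffered_async:
  "is_async cap ch \<Longrightarrow> length (buffered cap \<tau> ch) = S_cnt \<tau> ch - R_cnt \<tau> ch"
  by (simp add: buffered_def S_cnt_def)

lemma hd_buffered:
  "is_async cap ch \<Longrightarrow> R_cnt \<tau> ch < S_cnt \<tau> ch \<Longrightarrow>
     hd (buffered cap \<tau> ch) = filter (is_snd_on ch) \<tau> ! R_cnt \<tau> ch"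
  by (simp add: buffered_def S_cnt_def hd_drop_conv_nth)

lemma buffered_snoc_other: "ev_ch e \<noteq> ch \<Longrightarrow> buffered cap (\<tau> @ [e]) ch = buffered cap \<tau> ch"
  by (simp add: buffered_def R_cnt_snoc is_rcv_on_def is_snd_on_def)

lemma buffered_snoc_sync: "is_sync cap (ev_ch e) \<Longrightarrow> buffered cap (\<tau> @ [e]) = buffered cap \<tau>"
  by (rule ext) (metis buffered_sync buffered_snoc_other)

lemma buffered_snoc_receive:
  "ev_op e = Rcv \<Longrightarrow> buffered cap (\<tau> @ [e]) (ev_ch e) = tl (buffered cap \<tau> (ev_ch e))"
  by (simp add: buffered_def R_cnt_snoc is_rcv_on_def is_snd_on_def drop_Suc tl_drop)

lemma buffered_snoc_send:
  "ev_op e = Snd \<Longrightarrow> is_async cap (ev_ch e) \<Longrightarrow> R_cnt \<tau> (ev_ch e) \<le> S_cnt \<tau> (ev_ch e) \<Longrightarrow>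
     buffered cap (\<tau> @ [e]) (ev_ch e) = buffered cap \<tau> (ev_ch e) @ [e]"
  by (simp add: buffered_def R_cnt_snoc S_cnt_def is_rcv_on_def is_snd_on_def)

lemma admissible_Nil [simp]: "admissible cap []"
  by (simp add: admissible_def)

lemma admissible_snoc: "admissible cap (\<tau> @ [e]) \<longleftrightarrow> admissible cap \<tau> \<and> enabled cap \<tau> e"
  by (auto simp: admissible_def nth_append less_Suc_eq)

lemma admissible_take: "admissible cap \<sigma> \<Longrightarrow> admissible cap (take k \<sigma>)"
  by (auto simp: admissible_def min_def)

lemma admissible_channel_counts:
  assumes "admissible cap \<tau>"
  shows "(\<forall>ch. is_async cap ch \<longrightarrow> R_cnt \<tau> ch \<le> S_cnt \<tau> ch \<and> S_cnt \<tau> ch \<le> R_cnt \<tau> ch + cap ch) \<and>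
         (\<forall>ch. is_sync cap ch \<longrightarrow>
            S_cnt \<tau> ch = R_cnt \<tau> ch + (if \<exists>e. pending_send cap \<tau> = Some e \<and> ev_ch e = ch then 1 else 0))"
  using assms
proof (induction \<tau> rule: rev_induct)
  case Nil
  then show ?case by (simp add: S_cnt_def R_cnt_def pending_send_def)
next
  case (snoc e \<tau>)
  then have "enabled cap \<tau> e"
    "\<forall>ch. is_async cap ch \<longrightarrow> R_cnt \<tau> ch \<le> S_cnt \<tau> ch \<and> S_cnt \<tau> ch \<le> R_cnt \<tau> ch + cap ch"
    "\<forall>ch. is_sync cap ch \<longrightarrow>
       S_cnt \<tau> ch = R_cnt \<tau> ch + (if \<exists>e. pending_send cap \<tau> = Some e \<and> ev_ch e = ch then 1 else 0)"
    by (auto simp: admissible_snoc)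
  then show ?case
    by (cases "ev_op e")
      (auto simp: enabled_def Let_def S_cnt_snoc R_cnt_snoc pending_send_snoc is_snd_on_def
        is_rcv_on_def is_async_iff_not_sync length_buffered_async buffered_eq_Nil_iff split: if_splits)
qed

lemma admissible_async_counts:
  "admissible cap \<tau> \<Longrightarrow> is_async cap ch \<Longrightarrow> R_cnt \<tau> ch \<le> S_cnt \<tau> ch \<and> S_cnt \<tau> ch \<le> R_cnt \<tau> ch + cap ch"
  using admissible_channel_counts by blast

lemma admissible_sync_counts:
  "admissible cap \<tau> \<Longrightarrow> is_sync cap ch \<Longrightarrow>
     S_cnt \<tau> ch = R_cnt \<tau> ch + (if \<exists>e. pending_send cap \<tau> = Some e \<and> ev_ch e = ch then 1 else 0)"
  using admissible_channel_counts by blast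

lemma length_buffered_le_cap:
  assumes "admissible cap \<tau>"
  shows "length (buffered cap \<tau> ch) \<le> cap ch"
proof (cases "is_async cap ch")
  case True
  then show ?thesis
    using admissible_async_counts[OF assms True] by (simp add: length_buffered_async le_diff_conv)
qed (simp add: buffered_sync is_async_iff_not_sync)

lemma pending_send_unmatched:
  assumes "admissible cap \<tau>" and "pending_send cap \<tau> = Some e" and "ch = ev_ch e"
  shows "R_cnt \<tau> ch < S_cnt \<tau> ch \<and> filter (is_snd_on ch) \<tau> ! R_cnt \<tau> ch = e"
proof -
  obtain \<tau>' where \<tau>: "\<tau> = \<tau>' @ [e]" and "is_sync cap ch" "is_snd_on ch e"
    using pending_send_SomeD[OF assms(2)] assms(3) by (metis is_snd_on_def)
  then have "S_cnt \<tau> ch = Suc (R_cnt \<tau> ch)"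
    using admissible_sync_counts[OF assms(1)] assms(2,3) by simp
  moreover have "filter (is_snd_on ch) \<tau> = filter (is_snd_on ch) \<tau>' @ [e]"
    using \<tau> \<open>is_snd_on ch e\<close> by simp
  ultimately show ?thesis by (simp add: S_cnt_def nth_append)
qed

lemma enabled_receive_matches:
  assumes "admissible cap \<tau>" and "enabled cap \<tau> e" and "ev_op e = Rcv" and "ch = ev_ch e"
  shows "R_cnt \<tau> ch < S_cnt \<tau> ch \<and> ev_val (filter (is_snd_on ch) \<tau> ! R_cnt \<tau> ch) = ev_val e"
proof (cases "is_sync cap ch")
  case True
  then obtain e' where "pending_send cap \<tau> = Some e'" "ev_ch e' = ch" "ev_val e' = ev_val e"
    using assms(2-4) by (auto simp: enabled_def is_snd_on_def)
  then show ?thesis using pending_send_unmatched[OF assms(1)] by metis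
next
  case False
  then have "buffered cap \<tau> ch \<noteq> []" "ev_val (hd (buffered cap \<tau> ch)) = ev_val e"
    using assms(2-4) by (auto simp: enabled_def Let_def)
  moreover have "R_cnt \<tau> ch < S_cnt \<tau> ch"
    using calculation(1) by (simp add: buffered_eq_Nil_iff)
  ultimately show ?thesis using False hd_buffered by (metis is_async_iff_not_sync)
qed

subsection \<open>Well-formedness\<close>

lemma enabled_after_pending_send:
  assumes "enabled cap \<tau> e" and "pending_send cap \<tau> = Some e'"
  shows "is_rcv_on (ev_ch e') e \<and> ev_thread e \<noteq> ev_thread e'"
  using assms by (cases "ev_op e")
    (auto simp: enabled_def Let_def is_snd_on_def is_rcv_on_def split: if_splits)

lemma admissible_receive_values:
  assumes "admissible cap \<sigma>" and "i < length (filter (is_rcv_on ch) \<sigma>)"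
  shows "i < length (filter (is_snd_on ch) \<sigma>) \<and>
         ev_val (filter (is_snd_on ch) \<sigma> ! i) = ev_val (filter (is_rcv_on ch) \<sigma> ! i)"
  using assms
proof (induction \<sigma> arbitrary: i rule: rev_induct)
  case Nil
  then show ?case by simp
next
  case (snoc e \<tau>)
  have adm: "admissible cap \<tau>" and en: "enabled cap \<tau> e"
    using snoc.prems(1) by (auto simp: admissible_snoc)
  show ?case
  proof (cases "i < R_cnt \<tau> ch")
    case True
    then show ?thesis using snoc.IH[OF adm, of i] by (auto simp: R_cnt_def nth_append)
  next
    case False
    then have rcv: "is_rcv_on ch e" and i: "i = R_cnt \<tau> ch"
      using snoc.prems(2) by (auto simp: R_cnt_def split: if_splits)
    then have "R_cnt \<tau> ch < S_cnt \<tau> ch \<and> ev_val (filter (is_snd_on ch) \<tau> ! R_cnt \<tau> ch) = ev_val e"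
      using enabled_receive_matches[OF adm en] by (auto simp: is_rcv_on_def)
    moreover have "\<not> is_snd_on ch e" using rcv by (auto simp: is_snd_on_def is_rcv_on_def)
    ultimately show ?thesis using rcv i by (simp add: S_cnt_def R_cnt_def nth_append)
  qed
qed

lemma admissible_well_formed:
  assumes adm: "admissible cap \<sigma>" and none: "pending_send cap \<sigma> = None"
  shows "well_formed cap \<sigma>"
  unfolding well_formed_def
proof (intro conjI allI impI)
  fix ch k assume "is_async cap ch" "k \<le> length \<sigma>"
  then show "R_cnt (take k \<sigma>) ch \<le> S_cnt (take k \<sigma>) ch"
    and "S_cnt (take k \<sigma>) ch \<le> R_cnt (take k \<sigma>) ch + cap ch"
    using admissible_async_counts[OF admissible_take[OF adm]] by auto
next
  fix ch i assume "is_sync cap ch" and i: "i < length \<sigma>" and snd: "is_snd_on ch (\<sigma> ! i)"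
  then have pending: "pending_send cap (take (Suc i) \<sigma>) = Some (\<sigma> ! i)"
    by (simp add: pending_send_take is_snd_on_def)
  show next_i: "Suc i < length \<sigma>"
    using none pending i by (metis Suc_lessI take_all order_refl option.distinct(1))
  have "enabled cap (take (Suc i) \<sigma>) (\<sigma> ! Suc i)"
    using adm next_i by (simp add: admissible_def)
  then show "is_rcv_on ch (\<sigma> ! Suc i)" and "ev_thread (\<sigma> ! Suc i) \<noteq> ev_thread (\<sigma> ! i)"
    using enabled_after_pending_send[OF _ pending] snd by (auto simp: is_snd_on_def)
next
  fix ch i assume sync: "is_sync cap ch" and i: "i < length \<sigma>" and rcv: "is_rcv_on ch (\<sigma> ! i)"
  have "enabled cap (take i \<sigma>) (\<sigma> ! i)" using adm i by (simp add: admissible_def)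
  then obtain e' where "pending_send cap (take i \<sigma>) = Some e'" "is_snd_on ch e'"
    "ev_thread e' \<noteq> ev_thread (\<sigma> ! i)"
    using sync rcv by (auto simp: enabled_def is_rcv_on_def)
  then show "0 < i" "is_snd_on ch (\<sigma> ! (i - 1))" "ev_thread (\<sigma> ! (i - 1)) \<noteq> ev_thread (\<sigma> ! i)"
    using i by (auto simp: pending_send_take split: if_splits)
next
  fix ch i assume "i < length (filter (is_rcv_on ch) \<sigma>)"
  then show "i < length (filter (is_snd_on ch) \<sigma>)"
    and "ev_val (filter (is_snd_on ch) \<sigma> ! i) = ev_val (filter (is_rcv_on ch) \<sigma> ! i)"
    using admissible_receive_values[OF adm] by auto
qed

lemma well_formed_no_pending_send:
  assumes "well_formed cap \<sigma>"
  shows "pending_send cap \<sigma> = None"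
proof (rule ccontr)
  assume "pending_send cap \<sigma> \<noteq> None"
  then have "\<sigma> \<noteq> []" "is_sync cap (ev_ch (last \<sigma>))" "is_snd_on (ev_ch (last \<sigma>)) (\<sigma> ! (length \<sigma> - 1))"
    by (auto simp: pending_send_def is_snd_on_def last_conv_nth split: if_splits)
  then show False using assms unfolding well_formed_def
    by (metis Suc_pred' length_greater_0_conv lessI less_irrefl)
qed

lemma well_formed_pending_send_take:
  assumes wf: "well_formed cap \<sigma>" and k: "k < length \<sigma>"
    and pending: "pending_send cap (take k \<sigma>) = Some e'"
  shows "is_rcv_on (ev_ch e') (\<sigma> ! k) \<and> ev_thread (\<sigma> ! k) \<noteq> ev_thread e'"
proof -
  have "0 < k" "e' = \<sigma> ! (k - 1)" "is_sync cap (ev_ch e')" "is_snd_on (ev_ch e') (\<sigma> ! (k - 1))"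
    using pending k by (auto simp: pending_send_take is_snd_on_def split: if_splits)
  then show ?thesis using wf k unfolding well_formed_def
    by (metis Suc_pred' less_imp_diff_less)
qed

lemma well_formed_receive_value:
  assumes wf: "well_formed cap \<sigma>" and k: "k < length \<sigma>" and rcv: "is_rcv_on ch (\<sigma> ! k)"
    and unmatched: "R_cnt (take k \<sigma>) ch < S_cnt (take k \<sigma>) ch"
  shows "ev_val (filter (is_snd_on ch) (take k \<sigma>) ! R_cnt (take k \<sigma>) ch) = ev_val (\<sigma> ! k)"
proof -
  let ?i = "R_cnt (take k \<sigma>) ch"
  have "?i < length (filter (is_rcv_on ch) \<sigma>)" "filter (is_rcv_on ch) \<sigma> ! ?i = \<sigma> ! k"
    using filter_take_nth[OF k, of "is_rcv_on ch"] rcv by (simp_all add: R_cnt_def)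
  then have "ev_val (filter (is_snd_on ch) \<sigma> ! ?i) = ev_val (\<sigma> ! k)"
    using wf unfolding well_formed_def by metis
  then show ?thesis using unmatched nth_filter_take by (metis S_cnt_def)
qed

text \<open>The receive is enabled because the event just before it is its partner send, which is
  pending and is the first unmatched send on the channel.\<close>
lemma well_formed_sync_receive_enabled:
  assumes wf: "well_formed cap \<sigma>" and k: "k < length \<sigma>" and adm: "admissible cap (take k \<sigma>)"
    and sync: "is_sync cap (ev_ch (\<sigma> ! k))" and rcv: "ev_op (\<sigma> ! k) = Rcv"
  shows "enabled cap (take k \<sigma>) (\<sigma> ! k)"
proof -
  define ch where "ch = ev_ch (\<sigma> ! k)"
  have "0 < k" "is_snd_on ch (\<sigma> ! (k - 1))" "ev_thread (\<sigma> ! (k - 1)) \<noteq> ev_thread (\<sigma> ! k)"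
    using wf sync rcv k unfolding well_formed_def by (auto simp: ch_def is_rcv_on_def)
  moreover from this have pending: "pending_send cap (take k \<sigma>) = Some (\<sigma> ! (k - 1))"
    using k sync by (simp add: ch_def pending_send_take is_snd_on_def)
  moreover have "ev_val (\<sigma> ! (k - 1)) = ev_val (\<sigma> ! k)"
    using pending_send_unmatched[OF adm pending] well_formed_receive_value[OF wf k] rcv calculation(2)
    by (metis ch_def is_rcv_on_def is_snd_on_def)
  ultimately show ?thesis using sync rcv by (auto simp: enabled_def ch_def[symmetric])
qed

lemma well_formed_enabled:
  assumes wf: "well_formed cap \<sigma>" and k: "k < length \<sigma>" and adm: "admissible cap (take k \<sigma>)"
  shows "enabled cap (take k \<sigma>) (\<sigma> ! k)"
proof (cases "is_sync cap (ev_ch (\<sigma> ! k)) \<and> ev_op (\<sigma> ! k) = Rcv")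
  case True
  then show ?thesis using well_formed_sync_receive_enabled[OF assms] by blast
next
  case False
  define \<tau> e ch where "\<tau> = take k \<sigma>" and "e = \<sigma> ! k" and "ch = ev_ch e"
  have none: "pending_send cap \<tau> = None"
    using False well_formed_pending_send_take[OF wf k] pending_send_SomeD(2)
    by (cases "pending_send cap \<tau>") (auto simp: \<tau>_def e_def ch_def is_rcv_on_def)
  have "enabled cap \<tau> e"
  proof (cases "is_sync cap ch")
    case True
    then show ?thesis using False none
      by (cases "ev_op e") (simp_all add: enabled_def \<tau>_def e_def ch_def)
  next
    case async: False
    then have "is_async cap ch" by (simp add: is_async_iff_not_sync)
    then have "R_cnt (\<tau> @ [e]) ch \<le> S_cnt (\<tau> @ [e]) ch \<and> S_cnt (\<tau> @ [e]) ch \<le> R_cnt (\<tau> @ [e]) ch + cap ch"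
      "R_cnt \<tau> ch \<le> S_cnt \<tau> ch"
      using wf k admissible_async_counts[OF adm] unfolding well_formed_def
      by (auto simp: \<tau>_def e_def take_Suc_conv_app_nth[symmetric] simp del: take_Suc)
    moreover have "ev_val (filter (is_snd_on ch) \<tau> ! R_cnt \<tau> ch) = ev_val e"
      if "ev_op e = Rcv" "R_cnt \<tau> ch < S_cnt \<tau> ch"
      using well_formed_receive_value[OF wf k] that by (simp add: \<tau>_def e_def ch_def is_rcv_on_def)
    ultimately show ?thesis
      using async none \<open>is_async cap ch\<close>
      by (cases "ev_op e") (auto simp: enabled_def Let_def ch_def[symmetric] S_cnt_snoc R_cnt_snoc
          is_snd_on_def is_rcv_on_def length_buffered_async buffered_eq_Nil_iff hd_buffered)
  qed
  then show ?thesis by (simp add: \<tau>_def e_def)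
qed

lemma well_formed_admissible:
  assumes "well_formed cap \<sigma>"
  shows "admissible cap \<sigma>"
proof -
  have "admissible cap (take k \<sigma>)" if "k \<le> length \<sigma>" for k
    using that
  proof (induction k)
    case (Suc k)
    then show ?case
      using well_formed_enabled[OF assms] by (simp add: take_Suc_conv_app_nth admissible_snoc)
  qed simp
  then show ?thesis by (metis order_refl take_all)
qed

lemma well_formed_iff_admissible:
  "well_formed cap \<sigma> \<longleftrightarrow> admissible cap \<sigma> \<and> pending_send cap \<sigma> = None"
  using admissible_well_formed well_formed_admissible well_formed_no_pending_send by blast

definition down_closed ::
  "(('i, 't, 'c, 'v) event \<times> ('i, 't, 'c, 'v) event) set \<Rightarrow> ('i, 't, 'c, 'v) event set \<Rightarrow> bool" where
  "down_closed po Y \<longleftrightarrow> (\<forall>f\<in>Y. \<forall>e. (e, f) \<in> po \<longrightarrow> e \<in> Y)"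

lemma cnt_snd_set: "distinct \<tau> \<Longrightarrow> cnt_snd (set \<tau>) ch = S_cnt \<tau> ch"
  unfolding cnt_snd_def S_cnt_def by (metis distinct_card distinct_filter set_filter)

lemma cnt_rcv_set: "distinct \<tau> \<Longrightarrow> cnt_rcv (set \<tau>) ch = R_cnt \<tau> ch"
  unfolding cnt_rcv_def R_cnt_def by (metis distinct_card distinct_filter set_filter)

lemma length_drop_mem:
  assumes "x \<in> set (drop n (xs @ x # ys))" and "x \<notin> set ys"
  shows "length ys < length (drop n (xs @ x # ys))"
proof -
  have "n \<le> length xs"
  proof (rule ccontr)
    assume "\<not> n \<le> length xs"
    then obtain m where "n = Suc (length xs + m)" by (metis le_add1 less_imp_Suc_add not_le)
    then have "drop n (xs @ x # ys) = drop m ys" by simp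
    then show False using assms by (metis in_set_dropD)
  qed
  then show ?thesis by simp
qed

text \<open>The sends of \<open>e\<close>'s thread that follow \<open>e\<close> in \<open>po\<close> also follow it in \<open>\<tau>\<close>, so they are
  buffered behind it.\<close>
lemma buffered_among_last_sends:
  assumes irrefl: "irrefl po" and distinct: "distinct \<tau>"
    and sorted: "sorted_wrt (\<lambda>e f. (f, e) \<notin> po) \<tau>" and e: "e \<in> set (buffered cap \<tau> ch)"
  shows "among_last_sends po (set \<tau>) ch (length (buffered cap \<tau> ch)) e"
proof -
  have buffered: "buffered cap \<tau> ch = drop (R_cnt \<tau> ch) (filter (is_snd_on ch) \<tau>)"
    using e by (auto simp: buffered_def split: if_splits)
  then have "e \<in> set \<tau>" "is_snd_on ch e" using e by (auto dest: in_set_dropD)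
  then obtain \<tau>1 \<tau>2 where split: "\<tau> = \<tau>1 @ e # \<tau>2" by (meson split_list)
  define B where "B = filter (is_snd_on ch) \<tau>2"
  have sends: "filter (is_snd_on ch) \<tau> = filter (is_snd_on ch) \<tau>1 @ e # B"
    using split \<open>is_snd_on ch e\<close> by (simp add: B_def)
  have "e \<notin> set B" using distinct split by (simp add: B_def)
  moreover have "e \<in> set (drop (R_cnt \<tau> ch) (filter (is_snd_on ch) \<tau>1 @ e # B))"
    using e buffered sends by simp
  ultimately have "length B < length (buffered cap \<tau> ch)"
    using buffered sends length_drop_mem by simp
  moreover have "{f\<in>set \<tau>. is_snd_on ch f \<and> ev_thread f = ev_thread e \<and> (e, f) \<in> po} \<subseteq> set B"
    using sorted irrefl split by (auto simp: B_def sorted_wrt_append irrefl_def)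
  then have "card {f\<in>set \<tau>. is_snd_on ch f \<and> ev_thread f = ev_thread e \<and> (e, f) \<in> po} \<le> length B"
    using card_mono[OF List.finite_set] card_length[of B] by (meson le_trans)
  ultimately show ?thesis
    using \<open>e \<in> set \<tau>\<close> \<open>is_snd_on ch e\<close> by (simp add: among_last_sends_def)
qed

lemma frontier_node_frontier_of:
  assumes irrefl: "irrefl po" and distinct: "distinct \<tau>" and sub: "set \<tau> \<subseteq> S"
    and closed: "down_closed po (set \<tau>)" and sorted: "sorted_wrt (\<lambda>e f. (f, e) \<notin> po) \<tau>"
    and adm: "admissible cap \<tau>"
  shows "frontier_node S po cap (frontier_of cap \<tau>)"
proof -
  note counts = cnt_snd_set[OF distinct] cnt_rcv_set[OF distinct]
  have sync: "cnt_snd (set \<tau>) ch =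
      cnt_rcv (set \<tau>) ch + (if \<exists>e. pending_send cap \<tau> = Some e \<and> ev_ch e = ch then 1 else 0)"
    if "is_sync cap ch" for ch
    using admissible_sync_counts[OF adm that] by (simp add: counts)
  then have sync_cases: "\<forall>ch. is_sync cap ch \<longrightarrow>
      cnt_rcv (set \<tau>) ch = cnt_snd (set \<tau>) ch \<or> cnt_rcv (set \<tau>) ch + 1 = cnt_snd (set \<tau>) ch"
    by simp
  have unbalanced: "cnt_rcv (set \<tau>) ch + 1 = cnt_snd (set \<tau>) ch \<longleftrightarrow>
      (\<exists>e. pending_send cap \<tau> = Some e \<and> ev_ch e = ch)" if "is_sync cap ch" for ch
    using sync[OF that] by simp
  then have unique: "\<forall>ch1 ch2. is_sync cap ch1 \<and> is_sync cap ch2 \<and>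
      cnt_rcv (set \<tau>) ch1 + 1 = cnt_snd (set \<tau>) ch1 \<and> cnt_rcv (set \<tau>) ch2 + 1 = cnt_snd (set \<tau>) ch2
      \<longrightarrow> ch1 = ch2"
    by force
  have async: "\<forall>ch. is_async cap ch \<longrightarrow>
      cnt_rcv (set \<tau>) ch \<le> cnt_snd (set \<tau>) ch \<and> cnt_snd (set \<tau>) ch \<le> cnt_rcv (set \<tau>) ch + cap ch"
    using admissible_async_counts[OF adm] by (simp add: counts)
  have queues: "\<forall>ch. is_async cap ch \<longrightarrow> length (buffered cap \<tau> ch) \<le> cap ch \<and>
      (\<forall>e\<in>set (buffered cap \<tau> ch). among_last_sends po (set \<tau>) ch (length (buffered cap \<tau> ch)) e)"
    using length_buffered_le_cap[OF adm] buffered_among_last_sends[OF irrefl distinct sorted] by blast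
  have pending: "if \<forall>ch. is_sync cap ch \<longrightarrow> cnt_rcv (set \<tau>) ch = cnt_snd (set \<tau>) ch
      then pending_send cap \<tau> = None
      else \<exists>e ch. pending_send cap \<tau> = Some e \<and> e \<in> S \<and> is_sync cap ch \<and> is_snd_on ch e
             \<and> cnt_rcv (set \<tau>) ch + 1 = cnt_snd (set \<tau>) ch"
  proof (cases "pending_send cap \<tau>")
    case None
    then show ?thesis using sync by simp
  next
    case (Some e)
    then have "e \<in> S" "is_sync cap (ev_ch e)" "is_snd_on (ev_ch e) e"
      using sub by (auto simp: pending_send_def is_snd_on_def split: if_splits)
    moreover from this have "cnt_rcv (set \<tau>) (ev_ch e) + 1 = cnt_snd (set \<tau>) (ev_ch e)"
      using unbalanced Some by blast
    ultimately show ?thesis using Some by force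
  qed
  have sync_empty: "\<forall>ch. is_sync cap ch \<longrightarrow> buffered cap \<tau> ch = []"
    by (simp add: buffered_sync)
  show ?thesis
    unfolding frontier_node_def frontier_of_def prod.case
    using sub closed[unfolded down_closed_def] sync_cases unique async sync_empty queues pending
    by (intro conjI) assumption+
qed

definition frontier_move ::
  "('c \<Rightarrow> nat) \<Rightarrow> ('c \<Rightarrow> ('i, 't, 'c, 'v) event list) \<Rightarrow> ('i, 't, 'c, 'v) event option \<Rightarrow>
   ('i, 't, 'c, 'v) event \<Rightarrow> ('c \<Rightarrow> ('i, 't, 'c, 'v) event list) \<Rightarrow> ('i, 't, 'c, 'v) event option \<Rightarrow> bool" where
  "frontier_move cap Q1 I1 e Q2 I2 \<longleftrightarrow>
    (let ch = ev_ch e in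
      (is_async cap ch \<and> ev_op e = Rcv \<and> I1 = None \<and> I2 = None \<and>
         Q1 ch \<noteq> [] \<and> ev_val (hd (Q1 ch)) = ev_val e \<and> Q1 ch = hd (Q1 ch) # Q2 ch \<and>
         (\<forall>ch'. is_async cap ch' \<and> ch' \<noteq> ch \<longrightarrow> Q2 ch' = Q1 ch')) \<or>
      (is_async cap ch \<and> ev_op e = Snd \<and> I1 = None \<and> I2 = None \<and>
         length (Q1 ch) < cap ch \<and> Q2 ch = Q1 ch @ [e] \<and>
         (\<forall>ch'. is_async cap ch' \<and> ch' \<noteq> ch \<longrightarrow> Q2 ch' = Q1 ch')) \<or>
      (is_sync cap ch \<and> ev_op e = Snd \<and> I1 = None \<and> I2 = Some e \<and> Q1 = Q2) \<or>
      (is_sync cap ch \<and> ev_op e = Rcv \<and>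
         (\<exists>e'. I1 = Some e' \<and> is_snd_on ch e' \<and> ev_val e' = ev_val e \<and> ev_thread e' \<noteq> ev_thread e) \<and>
         I2 = None \<and> Q1 = Q2))"

lemma frontier_edge_iff:
  "frontier_edge S po cap (Y1, Q1, I1) (Y2, Q2, I2) \<longleftrightarrow>
     frontier_node S po cap (Y1, Q1, I1) \<and> frontier_node S po cap (Y2, Q2, I2) \<and>
     (\<exists>e\<in>S - Y1. Y2 = insert e Y1 \<and> frontier_move cap Q1 I1 e Q2 I2)"
  by (simp add: frontier_edge_def frontier_move_def)

lemma buffered_snoc_eq_iff:
  assumes "\<forall>c. is_sync cap c \<longrightarrow> Q c = []"
  shows "Q = buffered cap (\<tau> @ [e]) \<longleftrightarrow>
     Q (ev_ch e) = buffered cap (\<tau> @ [e]) (ev_ch e) \<and>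
     (\<forall>c. is_async cap c \<and> c \<noteq> ev_ch e \<longrightarrow> Q c = buffered cap \<tau> c)"
  using assms unfolding fun_eq_iff by (metis buffered_snoc_other buffered_sync is_async_iff_not_sync)

lemma frontier_move_iff:
  assumes adm: "admissible cap \<tau>" and sync_empty: "\<forall>c. is_sync cap c \<longrightarrow> Q2 c = []"
  shows "frontier_move cap (buffered cap \<tau>) (pending_send cap \<tau>) e Q2 I2 \<longleftrightarrow>
     enabled cap \<tau> e \<and> Q2 = buffered cap (\<tau> @ [e]) \<and> I2 = pending_send cap (\<tau> @ [e])"
proof (cases "is_sync cap (ev_ch e)")
  case True
  then show ?thesis
    by (cases "ev_op e") (auto simp: frontier_move_def enabled_def Let_def buffered_snoc_sync
        pending_send_snoc is_async_iff_not_sync)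
next
  case False
  then have "R_cnt \<tau> (ev_ch e) \<le> S_cnt \<tau> (ev_ch e)"
    using admissible_async_counts[OF adm] by (simp add: is_async_iff_not_sync)
  then show ?thesis
    using False
    by (cases "ev_op e") (auto simp: frontier_move_def enabled_def Let_def pending_send_snoc
        buffered_snoc_eq_iff[OF sync_empty] buffered_snoc_send buffered_snoc_receive
        is_async_iff_not_sync neq_Nil_conv)
qed

subsection \<open>Reachability\<close>

lemma sorted_snoc_if_down_closed:
  assumes "sorted_wrt (\<lambda>e f. (f, e) \<notin> po) \<tau>" and "down_closed po (set \<tau>)" and "e \<notin> set \<tau>"
  shows "sorted_wrt (\<lambda>e f. (f, e) \<notin> po) (\<tau> @ [e])"
  using assms by (auto simp: sorted_wrt_append down_closed_def)

lemma frontier_edge_frontier_of: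
  assumes irrefl: "irrefl po" and "distinct (\<tau> @ [e])" and "set (\<tau> @ [e]) \<subseteq> S"
    and "down_closed po (set \<tau>)" and "down_closed po (set (\<tau> @ [e]))"
    and "sorted_wrt (\<lambda>e f. (f, e) \<notin> po) (\<tau> @ [e])" and "admissible cap (\<tau> @ [e])"
  shows "frontier_edge S po cap (frontier_of cap \<tau>) (frontier_of cap (\<tau> @ [e]))"
proof -
  have adm: "admissible cap \<tau>" "enabled cap \<tau> e"
    using assms(7) by (simp_all add: admissible_snoc)
  have "frontier_node S po cap (frontier_of cap \<tau>)"
    using assms adm by (intro frontier_node_frontier_of) (auto simp: sorted_wrt_append)
  moreover have "frontier_node S po cap (frontier_of cap (\<tau> @ [e]))"
    using assms by (intro frontier_node_frontier_of)
  moreover have "frontier_move cap (buffered cap \<tau>) (pending_send cap \<tau>) e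
      (buffered cap (\<tau> @ [e])) (pending_send cap (\<tau> @ [e]))"
    using frontier_move_iff[OF adm(1)] adm(2) by (simp add: buffered_sync)
  ultimately show ?thesis
    using assms(2,3) unfolding frontier_of_def frontier_edge_iff by auto
qed

lemma reachable_frontier_of:
  assumes "irrefl po" and "distinct \<tau>" and "set \<tau> \<subseteq> S" and "down_closed po (set \<tau>)"
    and "sorted_wrt (\<lambda>e f. (f, e) \<notin> po) \<tau>" and "admissible cap \<tau>"
  shows "(frontier_edge S po cap)\<^sup>*\<^sup>* frontier_source (frontier_of cap \<tau>)"
  using assms(2-)
proof (induction \<tau> rule: rev_induct)
  case Nil
  then show ?case by (simp add: frontier_of_Nil)
next
  case (snoc e \<tau>)
  have "down_closed po (set \<tau>)"
    using snoc.prems(1,3,4) by (fastforce simp: down_closed_def sorted_wrt_append)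
  then have "(frontier_edge S po cap)\<^sup>*\<^sup>* frontier_source (frontier_of cap \<tau>)"
    using snoc by (intro snoc.IH) (auto simp: sorted_wrt_append admissible_snoc)
  moreover have "frontier_edge S po cap (frontier_of cap \<tau>) (frontier_of cap (\<tau> @ [e]))"
    using frontier_edge_frontier_of[OF assms(1)] snoc.prems \<open>down_closed po (set \<tau>)\<close> by blast
  ultimately show ?case by (rule rtranclp.rtrancl_into_rtrancl)
qed

lemma reachable_imp_frontier_of:
  assumes "(frontier_edge S po cap)\<^sup>*\<^sup>* frontier_source N"
  shows "\<exists>\<tau>. N = frontier_of cap \<tau> \<and> distinct \<tau> \<and> set \<tau> \<subseteq> S \<and>
           sorted_wrt (\<lambda>e f. (f, e) \<notin> po) \<tau> \<and> admissible cap \<tau>"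
  using assms
proof (induction rule: rtranclp_induct)
  case base
  show ?case by (rule exI[of _ "[]"]) (simp add: frontier_of_Nil)
next
  case (step N1 N2)
  then obtain \<tau> where \<tau>: "N1 = frontier_of cap \<tau>" "distinct \<tau>" "set \<tau> \<subseteq> S"
    "sorted_wrt (\<lambda>e f. (f, e) \<notin> po) \<tau>" "admissible cap \<tau>"
    by blast
  obtain Y2 Q2 I2 where N2: "N2 = (Y2, Q2, I2)" by (cases N2)
  with step.hyps(2) \<tau>(1) obtain e where e: "e \<in> S" "e \<notin> set \<tau>" "Y2 = insert e (set \<tau>)"
    and move: "frontier_move cap (buffered cap \<tau>) (pending_send cap \<tau>) e Q2 I2"
    and nodes: "frontier_node S po cap (frontier_of cap \<tau>)" "frontier_node S po cap (Y2, Q2, I2)"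
    by (auto simp: frontier_of_def frontier_edge_iff)
  have "\<forall>c. is_sync cap c \<longrightarrow> Q2 c = []" using nodes(2) by (simp add: frontier_node_def)
  then have "enabled cap \<tau> e" "N2 = frontier_of cap (\<tau> @ [e])"
    using move frontier_move_iff[OF \<tau>(5)] N2 e(3) by (auto simp: frontier_of_def)
  moreover have "down_closed po (set \<tau>)"
    using nodes(1) by (simp add: frontier_node_def frontier_of_def down_closed_def)
  ultimately show ?case
    using \<tau> e sorted_snoc_if_down_closed
    by (intro exI[of _ "\<tau> @ [e]"]) (auto simp: admissible_snoc)
qed

lemma sorted_wrt_po_of: "distinct \<sigma> \<Longrightarrow> sorted_wrt (\<lambda>e f. (f, e) \<notin> po_of \<sigma>) \<sigma>"
  by (auto simp: sorted_wrt_iff_nth_less po_of_def nth_eq_iff_index_eq)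

lemma po_of_linearization:
  assumes ae: "abstract_execution S po" and distinct: "distinct \<tau>" and set: "set \<tau> = S"
    and sorted: "sorted_wrt (\<lambda>e f. (f, e) \<notin> po) \<tau>"
  shows "po_of \<tau> = po"
proof (intro set_eqI iffI)
  fix p assume "p \<in> po_of \<tau>"
  then obtain i j where p: "p = (\<tau> ! i, \<tau> ! j)" "i < j" "j < length \<tau>"
    "ev_thread (\<tau> ! i) = ev_thread (\<tau> ! j)"
    by (auto simp: po_of_def)
  then have "\<tau> ! i \<in> S" "\<tau> ! j \<in> S" "\<tau> ! i \<noteq> \<tau> ! j"
    using distinct set by (auto simp: nth_eq_iff_index_eq)
  moreover have "(\<tau> ! j, \<tau> ! i) \<notin> po" using sorted p by (simp add: sorted_wrt_iff_nth_less)
  ultimately show "p \<in> po"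
    using ae p(1,4) unfolding abstract_execution_def by blast
next
  fix p assume p: "p \<in> po"
  then obtain x y where xy: "p = (x, y)" "x \<in> set \<tau>" "y \<in> set \<tau>" "ev_thread x = ev_thread y" "x \<noteq> y"
    using ae set unfolding abstract_execution_def irrefl_def by blast
  then obtain i j where ij: "x = \<tau> ! i" "y = \<tau> ! j" "i < length \<tau>" "j < length \<tau>"
    by (auto simp: in_set_conv_nth)
  moreover have "\<not> j < i" using p xy ij sorted by (auto simp: sorted_wrt_iff_nth_less)
  ultimately have "i < j" using xy(5) by (cases "i = j") auto
  then show "p \<in> po_of \<tau>" using xy ij unfolding po_of_def by blast
qed

lemma concretization_reaches_sink:
  assumes ae: "abstract_execution S po" and "concretizes \<sigma> S po cap"
  shows "frontier_sink S po cap (frontier_of cap \<sigma>)"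
    and "(frontier_edge S po cap)\<^sup>*\<^sup>* frontier_source (frontier_of cap \<sigma>)"
proof -
  have irrefl: "irrefl po" and closed: "down_closed po S"
    using ae by (auto simp: abstract_execution_def down_closed_def)
  from assms(2) have \<sigma>: "distinct \<sigma>" "set \<sigma> = S" "po_of \<sigma> = po" "well_formed cap \<sigma>"
    by (auto simp: concretizes_def)
  then have adm: "admissible cap \<sigma>" and none: "pending_send cap \<sigma> = None"
    and sorted: "sorted_wrt (\<lambda>e f. (f, e) \<notin> po) \<sigma>"
    using sorted_wrt_po_of well_formed_iff_admissible by blast+
  have "frontier_node S po cap (frontier_of cap \<sigma>)"
    using frontier_node_frontier_of[OF irrefl \<sigma>(1) _ _ sorted adm] \<sigma>(2) closed by simp
  then show "frontier_sink S po cap (frontier_of cap \<sigma>)"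
    using \<sigma>(2) none by (simp add: frontier_sink_def frontier_of_def)
  show "(frontier_edge S po cap)\<^sup>*\<^sup>* frontier_source (frontier_of cap \<sigma>)"
    using reachable_frontier_of[OF irrefl \<sigma>(1) _ _ sorted adm] \<sigma>(2) closed by simp
qed

lemma reachable_sink_concretizable:
  assumes ae: "abstract_execution S po" and "frontier_sink S po cap N"
    and "(frontier_edge S po cap)\<^sup>*\<^sup>* frontier_source N"
  shows "\<exists>\<sigma>. concretizes \<sigma> S po cap"
proof -
  obtain \<tau> where \<tau>: "N = frontier_of cap \<tau>" "distinct \<tau>"
    "sorted_wrt (\<lambda>e f. (f, e) \<notin> po) \<tau>" "admissible cap \<tau>"
    using reachable_imp_frontier_of[OF assms(3)] by blast
  then have "set \<tau> = S" "well_formed cap \<tau>"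
    using assms(2) by (auto simp: frontier_sink_def frontier_of_def well_formed_iff_admissible)
  then show ?thesis
    using po_of_linearization[OF ae] \<tau> by (auto simp: concretizes_def)
qed

theorem mainTheorem9:
  fixes S :: "('i, 't, 'c, 'v) event set"
    and po :: "(('i, 't, 'c, 'v) event \<times> ('i, 't, 'c, 'v) event) set"
    and cap :: "'c \<Rightarrow> nat"
  assumes "abstract_execution S po"
  shows "consistent S po cap \<longleftrightarrow>
         (\<exists>N. frontier_sink S po cap N \<and> (frontier_edge S po cap)\<^sup>*\<^sup>* frontier_source N)"
  using concretization_reaches_sink[OF assms] reachable_sink_concretizable[OF assms]
  unfolding consistent_def by blast

end
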